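(* Let $\beta\in[0,1)$, let $S:\mathbb R^n\to\mathbb R^n$ be a $\beta$-contraction and $T:\mathbb R^n\to\mathbb R^n$ a nonexpansive mapping with $\operatorname{Fix}(T)\ne\emptyset$. Let $\alpha_k=\min\{2/(k(1-\beta)),1\}$ for $k\ge1$, and let $\mathbf x^0\in\mathbb R^n$ and, for $k\ge1$, $\mathbf y^k=T(\mathbf x^{k-1})$, $\mathbf z^k=S(\mathbf x^{k-1})$, $\mathbf x^k=\alpha_k\mathbf z^k+(1-\alpha_k)\mathbf y^k$. Then for any $\tilde{\mathbf x}\in\operatorname{Fix}(T)$ and all $k\ge1$, $$\|\mathbf x^k-\mathbf x^{k-1}\|\le\frac{2C_{\tilde{\mathbf x}}J}{(1-\beta)k},\qquad \|\mathbf y^k-\mathbf x^{k-1}\|\le\frac{2C_{\tilde{\mathbf x}}(J+2)}{(1-\beta)k},$$ where $J=\lfloor 2/(1-\beta)\rfloor$ and $C_{\tilde{\mathbf x}}=\max\{\|\mathbf x^0-\tilde{\mathbf x}\|,\ \frac{1}{1-\beta}\|\tilde{\mathbf x}-S(\tilde{\mathbf x})\|\}$. In particular both sequences tend to $0$.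
   Context: A mapping $S$ is a $\beta$-contraction if $\|S(\mathbf x)-S(\mathbf y)\|\le\beta\|\mathbf x-\mathbf y\|$ for all $\mathbf x,\mathbf y$; $T$ is nonexpansive if this holds with constant $1$. $\operatorname{Fix}(T)=\{\mathbf x:T(\mathbf x)=\mathbf x\}$. *)

theory Defs
  imports "HOL-Analysis.Analysis"
begin

end

theory Submission
  imports Defs
begin

text \<open>
  Write \<open>C\<close> for \<open>C\<^sub>x\<^sub>t\<close>. A \<open>\<beta>\<close>-contraction moving the centre \<open>x\<^sub>t\<close> by at most \<open>(1-\<beta>)C\<close>, and a
  nonexpansive map fixing \<open>x\<^sub>t\<close>, both map the ball of radius \<open>C\<close> around \<open>x\<^sub>t\<close> into itself,
  so the whole iteration stays in that ball and any two of its points are at most \<open>2C\<close> apart.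
  Comparing two consecutive convex combinations gives, for \<open>d\<^sub>k = \<parallel>x\<^sup>k - x\<^sup>k\<^sup>-\<^sup>1\<parallel>\<close>,
  \<open>d\<^sub>k\<^sub>+\<^sub>1 \<le> (1 - \<alpha>\<^sub>k\<^sub>+\<^sub>1(1-\<beta>)) d\<^sub>k + 2C(\<alpha>\<^sub>k - \<alpha>\<^sub>k\<^sub>+\<^sub>1)\<close>.
  While \<open>k \<le> J\<close> the crude bound \<open>d\<^sub>k \<le> 2C\<close> already gives the rate; beyond \<open>J\<close> we have
  \<open>\<alpha>\<^sub>k = 2/(k(1-\<beta>))\<close>, and the recursion propagates \<open>d\<^sub>k \<le> 2CJ/((1-\<beta>)k)\<close> because \<open>J \<ge> 2\<close>.
  Finally \<open>y\<^sup>k - x\<^sup>k = \<alpha>\<^sub>k(y\<^sup>k - z\<^sup>k)\<close> contributes the extra \<open>2\<close> in the second bound.\<close>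

lemma Lipschitz_map_cball_self:
  fixes S :: "'a::metric_space \<Rightarrow> 'a"
  assumes "0 \<le> \<beta>" and "\<And>u v. dist (S u) (S v) \<le> \<beta> * dist u v"
    and "dist p (S p) \<le> (1 - \<beta>) * C" and "u \<in> cball p C"
  shows "S u \<in> cball p C"
proof -
  have "dist p (S u) \<le> dist p (S p) + dist (S p) (S u)" by (rule dist_triangle)
  also have "\<dots> \<le> (1 - \<beta>) * C + \<beta> * dist p u" using assms(2,3) by (intro add_mono) auto
  also have "\<dots> \<le> (1 - \<beta>) * C + \<beta> * C" using assms(1,4) by (simp add: mult_left_mono)
  finally show ?thesis by (simp add: algebra_simps)
qed

lemma norm_diff_convex_combinations_le:
  fixes z z' y y' :: "'a::real_normed_vector"
  assumes "0 \<le> a" "a \<le> b" "a \<le> 1"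
    and "norm (z' - z) \<le> \<beta> * d" "norm (y' - y) \<le> d" "norm (z - y) \<le> M"
  shows "norm ((a *\<^sub>R z' + (1 - a) *\<^sub>R y') - (b *\<^sub>R z + (1 - b) *\<^sub>R y))
           \<le> (1 - a * (1 - \<beta>)) * d + (b - a) * M"
proof -
  have "(a *\<^sub>R z' + (1 - a) *\<^sub>R y') - (b *\<^sub>R z + (1 - b) *\<^sub>R y)
      = a *\<^sub>R (z' - z) + (1 - a) *\<^sub>R (y' - y) + (b - a) *\<^sub>R (y - z)"
    by (simp add: algebra_simps)
  also have "norm \<dots> \<le> norm (a *\<^sub>R (z' - z)) + norm ((1 - a) *\<^sub>R (y' - y))
      + norm ((b - a) *\<^sub>R (y - z))"
    by (intro norm_triangle_le add_right_mono norm_triangle_ineq)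
  also have "\<dots> = a * norm (z' - z) + (1 - a) * norm (y' - y) + (b - a) * norm (z - y)"
    using assms(1-3) by (simp add: norm_minus_commute)
  also have "\<dots> \<le> a * (\<beta> * d) + (1 - a) * d + (b - a) * M"
    using assms by (intro add_mono mult_left_mono) auto
  finally show ?thesis by (simp add: algebra_simps)
qed

lemma harmonic_rate_step:
  fixes D K J m :: real
  assumes "0 \<le> K" "2 \<le> J" "1 \<le> m" "D \<le> K * J / m"
  shows "(1 - 2 / (m + 1)) * D + 2 * K / (m * (m + 1)) \<le> K * J / (m + 1)"
proof -
  have "0 \<le> 1 - 2 / (m + 1)" using assms(3) by (simp add: field_simps)
  with assms(4) have "(1 - 2 / (m + 1)) * D \<le> (1 - 2 / (m + 1)) * (K * J / m)"
    by (rule mult_left_mono)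
  also have "\<dots> + 2 * K / (m * (m + 1)) = K * ((m - 1) * J + 2) / (m * (m + 1))"
    using assms(3) by (simp add: divide_simps) (simp add: algebra_simps)
  also have "\<dots> \<le> K * (m * J) / (m * (m + 1))"
    using assms by (intro divide_right_mono mult_left_mono) (auto simp: algebra_simps)
  also have "\<dots> = K * J / (m + 1)" using assms(3) by simp
  finally show ?thesis by simp
qed

lemma harmonic_rate_recursion:
  fixes d :: "nat \<Rightarrow> real"
  assumes "0 \<le> K" "2 \<le> J"
    and initial: "\<And>k. 1 \<le> k \<Longrightarrow> real k \<le> J \<Longrightarrow> d k \<le> K * J / real k"
    and step: "\<And>k. 1 \<le> k \<Longrightarrow> J < real (Suc k) \<Longrightarrow>
      d (Suc k) \<le> (1 - 2 / real (Suc k)) * d k + 2 * K / (real k * real (Suc k))"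
    and "1 \<le> k"
  shows "d k \<le> K * J / real k"
  using \<open>1 \<le> k\<close>
proof (induction k rule: dec_induct)
  case base
  then show ?case using initial[of 1] \<open>2 \<le> J\<close> by simp
next
  case (step k)
  show ?case
  proof (cases "real (Suc k) \<le> J")
    case True
    then show ?thesis using initial[of "Suc k"] by simp
  next
    case False
    then have "d (Suc k) \<le> (1 - 2 / (real k + 1)) * d k + 2 * K / (real k * (real k + 1))"
      using step.hyps(1) assms(4)[of k] by (simp add: add.commute)
    also have "\<dots> \<le> K * J / (real k + 1)"
      using harmonic_rate_step assms(1,2) step by simp
    finally show ?thesis by (simp add: add.commute)
  qed
qed

lemma LIMSEQ_zero_if_norm_le_const_over_n:
  fixes f :: "nat \<Rightarrow> 'a::real_normed_vector"
  assumes "\<And>k. 1 \<le> k \<Longrightarrow> norm (f k) \<le> A / real k"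
  shows "f \<longlonglongrightarrow> 0"
proof (rule Lim_null_comparison)
  show "\<forall>\<^sub>F k in sequentially. norm (f k) \<le> A / real k"
    using eventually_ge_at_top[of 1] by eventually_elim (use assms in simp)
  show "(\<lambda>k. A / real k) \<longlonglongrightarrow> 0" by (rule lim_const_over_n)
qed

locale anchored_iteration =
  fixes \<beta> :: real
    and S T :: "'a::real_normed_vector \<Rightarrow> 'a"
    and \<alpha> :: "nat \<Rightarrow> real"
    and x y z :: "nat \<Rightarrow> 'a"
  assumes beta: "0 \<le> \<beta>" "\<beta> < 1"
    and S_contr: "\<And>u v. norm (S u - S v) \<le> \<beta> * norm (u - v)"
    and T_nonexp: "\<And>u v. norm (T u - T v) \<le> norm (u - v)"
    and alpha_def: "\<And>k. k \<ge> 1 \<Longrightarrow> \<alpha> k = min (2 / (real k * (1 - \<beta>))) 1"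
    and y_def: "\<And>k. k \<ge> 1 \<Longrightarrow> y k = T (x (k - 1))"
    and z_def: "\<And>k. k \<ge> 1 \<Longrightarrow> z k = S (x (k - 1))"
    and x_def: "\<And>k. k \<ge> 1 \<Longrightarrow> x k = \<alpha> k *\<^sub>R z k + (1 - \<alpha> k) *\<^sub>R y k"
begin

definition radius :: "'a \<Rightarrow> real" where
  "radius p = max (norm (x 0 - p)) (norm (p - S p) / (1 - \<beta>))"

definition J :: real where
  "J = real_of_int \<lfloor>2 / (1 - \<beta>)\<rfloor>"

lemma radius_nonneg: "0 \<le> radius p"
  by (simp add: radius_def le_max_iff_disj)

lemma J_ge_2: "2 \<le> J"
proof -
  have "2 \<le> 2 / (1 - \<beta>)" using beta by (simp add: field_simps)
  then have "2 \<le> \<lfloor>2 / (1 - \<beta>)\<rfloor>" by (metis floor_mono floor_numeral)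
  then show ?thesis by (simp add: J_def)
qed

lemma alpha_nonneg: "k \<ge> 1 \<Longrightarrow> 0 \<le> \<alpha> k"
  and alpha_le_1: "k \<ge> 1 \<Longrightarrow> \<alpha> k \<le> 1"
  and alpha_le: "k \<ge> 1 \<Longrightarrow> \<alpha> k \<le> 2 / (real k * (1 - \<beta>))"
  using alpha_def beta by auto

lemma alpha_antimono:
  assumes "k \<ge> 1"
  shows "\<alpha> (Suc k) \<le> \<alpha> k"
proof -
  have "2 / (real (Suc k) * (1 - \<beta>)) \<le> 2 / (real k * (1 - \<beta>))"
    using assms beta by (intro divide_left_mono mult_right_mono mult_pos_pos) auto
  then show ?thesis using alpha_def[of k] alpha_def[of "Suc k"] assms by (simp add: min_def)
qed

lemma alpha_eq_beyond_J:
  assumes "J < real k"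
  shows "\<alpha> k = 2 / (real k * (1 - \<beta>))"
proof -
  have "\<lfloor>2 / (1 - \<beta>)\<rfloor> + 1 \<le> int k" using assms by (simp add: J_def)
  then have "2 / (1 - \<beta>) < real k" by linarith
  then have "2 < real k * (1 - \<beta>)" using beta by (simp add: field_simps)
  then show ?thesis using alpha_def[of k] assms J_ge_2 by simp
qed

lemma dist_centre_S_le: "dist p (S p) \<le> (1 - \<beta>) * radius p"
proof -
  have "norm (p - S p) / (1 - \<beta>) \<le> radius p" by (simp add: radius_def)
  then show ?thesis using beta by (simp add: dist_norm field_simps)
qed

lemma dist_S_le: "dist (S u) (S v) \<le> \<beta> * dist u v"
  and dist_T_le: "dist (T u) (T v) \<le> 1 * dist u v"
  using S_contr T_nonexp by (simp_all add: dist_norm)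

lemma S_T_in_cball:
  assumes "T p = p" "u \<in> cball p (radius p)"
  shows "S u \<in> cball p (radius p)" and "T u \<in> cball p (radius p)"
proof -
  show "S u \<in> cball p (radius p)"
    by (rule Lipschitz_map_cball_self[OF beta(1) dist_S_le dist_centre_S_le assms(2)])
  show "T u \<in> cball p (radius p)"
    by (rule Lipschitz_map_cball_self[OF _ dist_T_le _ assms(2)]) (simp_all add: assms(1))
qed

lemma x_in_cball:
  assumes "T p = p"
  shows "x k \<in> cball p (radius p)"
proof (induction k)
  case 0
  then show ?case by (simp add: radius_def dist_norm norm_minus_commute)
next
  case (Suc k)
  have "\<alpha> (Suc k) *\<^sub>R S (x k) + (1 - \<alpha> (Suc k)) *\<^sub>R T (x k) \<in> cball p (radius p)"
    using S_T_in_cball[OF assms Suc] alpha_nonneg[of "Suc k"] alpha_le_1[of "Suc k"]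
    by (intro convexD[OF convex_cball]) auto
  then show ?case using x_def[of "Suc k"] y_def[of "Suc k"] z_def[of "Suc k"] by simp
qed

lemma norm_z_minus_y_le:
  assumes "T p = p" "k \<ge> 1"
  shows "norm (z k - y k) \<le> 2 * radius p"
proof -
  have "dist p (S (x (k - 1))) \<le> radius p" "dist p (T (x (k - 1))) \<le> radius p"
    using S_T_in_cball[OF assms(1) x_in_cball[OF assms(1)]] by auto
  then show ?thesis
    using assms(2) z_def y_def dist_triangle3[of "S (x (k - 1))" "T (x (k - 1))" p]
    by (simp add: dist_norm)
qed

lemma norm_x_diff_le_diameter:
  assumes "T p = p"
  shows "norm (x k - x j) \<le> 2 * radius p"
  using x_in_cball[OF assms, of k] x_in_cball[OF assms, of j] dist_triangle3[of "x k" "x j" p]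
  by (simp add: dist_norm)

lemma norm_x_step_le:
  assumes "T p = p" "k \<ge> 1"
  shows "norm (x (Suc k) - x k)
    \<le> (1 - \<alpha> (Suc k) * (1 - \<beta>)) * norm (x k - x (k - 1)) + (\<alpha> k - \<alpha> (Suc k)) * (2 * radius p)"
proof -
  have "norm (z (Suc k) - z k) \<le> \<beta> * norm (x k - x (k - 1))"
    and "norm (y (Suc k) - y k) \<le> norm (x k - x (k - 1))"
    using assms(2) S_contr T_nonexp by (simp_all add: y_def z_def)
  then show ?thesis
    using norm_diff_convex_combinations_le[OF alpha_nonneg alpha_antimono alpha_le_1]
      norm_z_minus_y_le[OF assms] assms(2) x_def[of "Suc k"] x_def[of k]
    by simp
qed

lemma norm_x_diff_le:
  assumes "T p = p" "k \<ge> 1"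
  shows "norm (x k - x (k - 1)) \<le> 2 * radius p * J / ((1 - \<beta>) * real k)"
proof -
  define K where "K = 2 * radius p / (1 - \<beta>)"
  have "norm (x k - x (k - 1)) \<le> K * J / real k"
  proof (rule harmonic_rate_recursion[where d = "\<lambda>k. norm (x k - x (k - 1))"])
    show "0 \<le> K" using beta radius_nonneg by (simp add: K_def)
    show "2 \<le> J" by (rule J_ge_2)
    show "norm (x k - x (k - 1)) \<le> K * J / real k" if "1 \<le> k" "real k \<le> J" for k
    proof -
      have "(1 - \<beta>) * real k \<le> real k" using beta by (intro mult_left_le_one_le) auto
      then have "2 * radius p * ((1 - \<beta>) * real k) \<le> 2 * radius p * J"
        using that(2) radius_nonneg by (intro mult_left_mono) auto
      then have "2 * radius p \<le> K * J / real k"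
        using that(1) beta by (simp add: K_def field_simps)
      then show ?thesis using norm_x_diff_le_diameter[OF assms(1)] order_trans by blast
    qed
    show "norm (x (Suc k) - x (Suc k - 1))
      \<le> (1 - 2 / real (Suc k)) * norm (x k - x (k - 1)) + 2 * K / (real k * real (Suc k))"
      if "1 \<le> k" "J < real (Suc k)" for k
    proof -
      have "\<alpha> (Suc k) * (1 - \<beta>) = 2 / real (Suc k)"
        unfolding alpha_eq_beyond_J[OF that(2)] using beta by (simp add: divide_simps)
      moreover have "(\<alpha> k - \<alpha> (Suc k)) * (2 * radius p) \<le> 2 * K / (real k * real (Suc k))"
      proof -
        have "(\<alpha> k - \<alpha> (Suc k)) * (2 * radius p)
            \<le> (2 / (real k * (1 - \<beta>)) - 2 / (real (Suc k) * (1 - \<beta>))) * (2 * radius p)"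
          using alpha_le[OF that(1)] alpha_eq_beyond_J[OF that(2)] radius_nonneg
          by (intro mult_right_mono) auto
        also have "\<dots> = 2 * K / (real k * real (Suc k))"
          using that(1) beta by (simp add: K_def divide_simps)
        finally show ?thesis .
      qed
      ultimately show ?thesis using norm_x_step_le[OF assms(1) that(1)] by simp
    qed
  qed fact
  then show ?thesis using beta by (simp add: K_def field_simps)
qed

lemma norm_y_diff_le:
  assumes "T p = p" "k \<ge> 1"
  shows "norm (y k - x (k - 1)) \<le> 2 * radius p * (J + 2) / ((1 - \<beta>) * real k)"
proof -
  have "y k - x k = \<alpha> k *\<^sub>R (y k - z k)" using x_def[OF assms(2)] by (simp add: algebra_simps)
  then have "norm (y k - x k) = \<alpha> k * norm (z k - y k)"
    using alpha_nonneg[OF assms(2)] by (simp add: norm_minus_commute)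
  also have "\<dots> \<le> 2 / (real k * (1 - \<beta>)) * (2 * radius p)"
    using alpha_nonneg alpha_le norm_z_minus_y_le radius_nonneg assms beta by (intro mult_mono) auto
  finally have "norm (y k - x k) \<le> 2 * radius p * 2 / ((1 - \<beta>) * real k)"
    by (simp add: mult.commute[of "1 - \<beta>"])
  then have "norm (y k - x (k - 1)) \<le> 2 * radius p * 2 / ((1 - \<beta>) * real k)
      + 2 * radius p * J / ((1 - \<beta>) * real k)"
    using norm_x_diff_le[OF assms] norm_triangle_ineq[of "y k - x k" "x k - x (k - 1)"] by simp
  then show ?thesis by (simp add: add_divide_distrib[symmetric] algebra_simps)
qed

end

theorem lemma4p3:
  fixes \<beta> :: real
    and S T :: "real ^ 'n \<Rightarrow> real ^ 'n"
    and \<alpha> :: "nat \<Rightarrow> real"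
    and x y z :: "nat \<Rightarrow> real ^ 'n"
    and xt :: "real ^ 'n"
  assumes beta: "0 \<le> \<beta>" "\<beta> < 1"
    and S_contr: "\<And>u v. norm (S u - S v) \<le> \<beta> * norm (u - v)"
    and T_nonexp: "\<And>u v. norm (T u - T v) \<le> norm (u - v)"
    and fix_ne: "{u. T u = u} \<noteq> {}"
    and alpha_def: "\<And>k. k \<ge> 1 \<Longrightarrow> \<alpha> k = min (2 / (real k * (1 - \<beta>))) 1"
    and y_def: "\<And>k. k \<ge> 1 \<Longrightarrow> y k = T (x (k - 1))"
    and z_def: "\<And>k. k \<ge> 1 \<Longrightarrow> z k = S (x (k - 1))"
    and x_def: "\<And>k. k \<ge> 1 \<Longrightarrow> x k = \<alpha> k *\<^sub>R z k + (1 - \<alpha> k) *\<^sub>R y k"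
    and xt_fix: "xt \<in> {u. T u = u}"
  shows "(\<forall>k\<ge>1.
            norm (x k - x (k - 1)) \<le>
              2 * max (norm (x 0 - xt)) (norm (xt - S xt) / (1 - \<beta>))
                * real_of_int \<lfloor>2 / (1 - \<beta>)\<rfloor> / ((1 - \<beta>) * real k)
          \<and> norm (y k - x (k - 1)) \<le>
              2 * max (norm (x 0 - xt)) (norm (xt - S xt) / (1 - \<beta>))
                * (real_of_int \<lfloor>2 / (1 - \<beta>)\<rfloor> + 2) / ((1 - \<beta>) * real k))
       \<and> ((\<lambda>k. norm (x k - x (k - 1))) \<longlonglongrightarrow> 0)
       \<and> ((\<lambda>k. norm (y k - x (k - 1))) \<longlonglongrightarrow> 0)"
proof -
  interpret anchored_iteration \<beta> S T \<alpha> x y z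
    using beta S_contr T_nonexp alpha_def y_def z_def x_def by unfold_locales
  have Txt: "T xt = xt" using xt_fix by simp
  have x_rate: "norm (x k - x (k - 1)) \<le> (2 * radius xt * J / (1 - \<beta>)) / real k" if "k \<ge> 1" for k
    using norm_x_diff_le[OF Txt that] by (simp add: mult.commute[of "1 - \<beta>"])
  have y_rate: "norm (y k - x (k - 1)) \<le> (2 * radius xt * (J + 2) / (1 - \<beta>)) / real k"
    if "k \<ge> 1" for k
    using norm_y_diff_le[OF Txt that] by (simp add: mult.commute[of "1 - \<beta>"])
  have "(\<lambda>k. norm (x k - x (k - 1))) \<longlonglongrightarrow> 0" "(\<lambda>k. norm (y k - x (k - 1))) \<longlonglongrightarrow> 0"
    using LIMSEQ_zero_if_norm_le_const_over_n[OF x_rate] LIMSEQ_zero_if_norm_le_const_over_n[OF y_rate]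
    by (simp_all add: tendsto_norm_zero_iff)
  then show ?thesis
    using norm_x_diff_le[OF Txt] norm_y_diff_le[OF Txt]
    unfolding radius_def[of xt, symmetric] J_def[symmetric] by blast
qed

end
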